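(* Let $R$ be a finite (associative, not necessarily unital) ring. (i) There exists $t\ge1$ such that $x^t=x^{2t}$ for all $x$ in $(R,\cdot)$, and there exists $t\ge1$ such that the $t$-th power of every element of $(R,\circ)$ equals its $2t$-th power in $(R,\circ)$. (ii) If all idempotents of $R$ are central, then $(R,\cdot)$ satisfies a reduced semigroup identity.
   Context: $(R,\circ)$ is $R$ with the operation $x\circ y=x+y+xy$ (powers in part (i) for $(R,\circ)$ are taken with respect to $\circ$). A semigroup identity is $u=v$ with $u\ne v$ words in a free semigroup holding under all substitutions; it is reduced if the first letters of $u,v$ differ and the last letters of $u,v$ differ. *)

theory Defs
  imports Main
begin

fun spow :: "('a \<Rightarrow> 'a \<Rightarrow> 'a) \<Rightarrow> 'a \<Rightarrow> nat \<Rightarrow> 'a" where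
  "spow f x 0 = undefined"
| "spow f x (Suc 0) = x"
| "spow f x (Suc (Suc n)) = f (spow f x (Suc n)) x"

definition circ_op :: "'a::ring \<Rightarrow> 'a \<Rightarrow> 'a" where
  "circ_op x y = x + y + x * y"

text \<open>Words of the free semigroup on letters nat are nonempty lists; evaluation
  under a substitution \<sigma> in a semigroup with operation f.\<close>
fun word_eval :: "('a \<Rightarrow> 'a \<Rightarrow> 'a) \<Rightarrow> (nat \<Rightarrow> 'a) \<Rightarrow> nat list \<Rightarrow> 'a" where
  "word_eval f \<sigma> [] = undefined"
| "word_eval f \<sigma> [x] = \<sigma> x"
| "word_eval f \<sigma> (x # y # ys) = f (\<sigma> x) (word_eval f \<sigma> (y # ys))"

definition semigroup_identity :: "('a \<Rightarrow> 'a \<Rightarrow> 'a) \<Rightarrow> nat list \<Rightarrow> nat list \<Rightarrow> bool" where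
  "semigroup_identity f u v \<longleftrightarrow> u \<noteq> [] \<and> v \<noteq> [] \<and> u \<noteq> v \<and>
     (\<forall>\<sigma>. word_eval f \<sigma> u = word_eval f \<sigma> v)"

definition reduced_identity :: "nat list \<Rightarrow> nat list \<Rightarrow> bool" where
  "reduced_identity u v \<longleftrightarrow> hd u \<noteq> hd v \<and> last u \<noteq> last v"

end

theory Submission
  imports Defs "HOL-Library.Cardinality"
begin

text \<open>Since spow is right-normed, the powers of x are the orbit of x under y \<mapsto> y x,
  so part (i) needs no associativity: in a finite set every orbit is eventually periodic,
  with preperiod and period at most the cardinality N, hence x^t = x^(2t) for t = N!.
  For part (ii), x^t is then idempotent and so central, whence x^t y^t = y^t x^t.\<close>

lemma spow_Suc: "0 < n \<Longrightarrow> spow f x (Suc n) = f (spow f x n) x"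
  by (cases n) auto

lemma spow_eq_funpow: "0 < n \<Longrightarrow> spow f x n = ((\<lambda>y. f y x) ^^ (n - 1)) x"
  by (induction f x n rule: spow.induct) auto

lemma funpow_eventually_periodic:
  fixes g :: "'a::finite \<Rightarrow> 'a"
  obtains i d where "i < CARD('a)" "0 < d" "d \<le> CARD('a)" "(g ^^ (i + d)) y = (g ^^ i) y"
proof -
  let ?orbit = "\<lambda>k. (g ^^ k) y"
  have "card (?orbit ` {0..CARD('a)}) < card {0..CARD('a)}"
    using card_mono[of UNIV "?orbit ` {0..CARD('a)}"] by simp
  then have "\<not> inj_on ?orbit {0..CARD('a)}"
    using card_image by fastforce
  then obtain i j where "i < j" "j \<le> CARD('a)" "?orbit i = ?orbit j"
    unfolding inj_on_def by (metis atLeastAtMost_iff linorder_neqE_nat)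
  then show thesis
    by (intro that[of i "j - i"]) auto
qed

lemma funpow_add_period:
  fixes g :: "'a \<Rightarrow> 'a"
  assumes period: "(g ^^ (i + d)) y = (g ^^ i) y" and "d dvd T" and "i \<le> j"
  shows "(g ^^ (j + T)) y = (g ^^ j) y"
proof -
  have "(g ^^ T) ((g ^^ i) y) = (g ^^ i) y"
    using funpow_mod_eq[where f = g and n = d and x = "(g ^^ i) y" and m = T] period \<open>d dvd T\<close>
    by (simp add: funpow_add add.commute)
  moreover have "j + T = (j - i) + T + i" and "j = (j - i) + i"
    using \<open>i \<le> j\<close> by simp_all
  ultimately show ?thesis
    by (metis comp_apply funpow_add)
qed

lemma finite_spow_fact_card:
  fixes f :: "'a::finite \<Rightarrow> 'a \<Rightarrow> 'a"
  shows "spow f x (fact CARD('a)) = spow f x (2 * fact CARD('a))"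
proof -
  let ?g = "\<lambda>y. f y x" and ?T = "fact CARD('a) :: nat"
  obtain i d where i: "i < CARD('a)" and d: "0 < d" "d \<le> CARD('a)"
    and period: "(?g ^^ (i + d)) x = (?g ^^ i) x"
    by (rule funpow_eventually_periodic)
  have "d dvd ?T"
    using d by (simp add: dvd_fact)
  moreover have "i \<le> ?T - 1"
    using i fact_ge_self[of "CARD('a)"] by linarith
  ultimately have "(?g ^^ (?T - 1 + ?T)) x = (?g ^^ (?T - 1)) x"
    using funpow_add_period[OF period] by blast
  moreover have "2 * ?T - 1 = ?T - 1 + ?T"
    using fact_ge_1[of "CARD('a)"] by linarith
  ultimately show ?thesis
    by (simp add: spow_eq_funpow)
qed

lemma word_eval_Cons:
  "w \<noteq> [] \<Longrightarrow> word_eval f \<sigma> (a # w) = f (\<sigma> a) (word_eval f \<sigma> w)"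
  by (cases w) auto

lemma reduced_identity_swap_blocks:
  "0 < t \<Longrightarrow> a \<noteq> b \<Longrightarrow>
    reduced_identity (replicate t a @ replicate t b) (replicate t b @ replicate t a)"
  by (cases t) (auto simp: reduced_identity_def)

context semigroup
begin

lemma spow_add:
  assumes "0 < m" and "0 < n"
  shows "spow f x (m + n) = spow f x m \<^bold>* spow f x n"
  using \<open>0 < n\<close>
proof (induction n rule: nat_induct_non_zero)
  case 1
  then show ?case
    using \<open>0 < m\<close> by (simp add: spow_Suc)
next
  case (Suc n)
  then show ?case
    by (simp add: spow_Suc assoc)
qed

lemma word_eval_append:
  "u \<noteq> [] \<Longrightarrow> v \<noteq> [] \<Longrightarrow> word_eval f \<sigma> (u @ v) = word_eval f \<sigma> u \<^bold>* word_eval f \<sigma> v"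
proof (induction u)
  case Nil
  then show ?case
    by simp
next
  case (Cons a u)
  then show ?case
    by (cases "u = []") (simp_all add: word_eval_Cons assoc)
qed

lemma word_eval_replicate:
  assumes "0 < n"
  shows "word_eval f \<sigma> (replicate n a) = spow f (\<sigma> a) n"
  using assms
proof (induction n rule: nat_induct_non_zero)
  case 1
  then show ?case
    by simp
next
  case (Suc n)
  have "replicate (Suc n) a = replicate n a @ [a]"
    by (simp add: replicate_append_same)
  with Suc show ?case
    by (simp add: word_eval_append spow_Suc)
qed

lemma semigroup_identity_swap_blocks:
  assumes "0 < t" and commute: "\<And>x y. spow f x t \<^bold>* spow f y t = spow f y t \<^bold>* spow f x t"
  shows "semigroup_identity f (replicate t 0 @ replicate t 1) (replicate t 1 @ replicate t 0)"
  unfolding semigroup_identity_def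
proof (intro conjI allI)
  fix \<sigma> :: "nat \<Rightarrow> 'a"
  show "word_eval f \<sigma> (replicate t 0 @ replicate t 1) = word_eval f \<sigma> (replicate t 1 @ replicate t 0)"
    using \<open>0 < t\<close> commute by (simp add: word_eval_append word_eval_replicate)
qed (use \<open>0 < t\<close> in auto)

lemma spow_central_if_idempotents_central:
  assumes "0 < t" and power_eq: "spow f x t = spow f x (2 * t)"
    and central: "\<And>e y. e \<^bold>* e = e \<Longrightarrow> e \<^bold>* y = y \<^bold>* e"
  shows "spow f x t \<^bold>* z = z \<^bold>* spow f x t"
proof (rule central)
  have "spow f x t \<^bold>* spow f x t = spow f x (2 * t)"
    using spow_add[OF \<open>0 < t\<close> \<open>0 < t\<close>] by (simp add: mult_2)
  with power_eq show "spow f x t \<^bold>* spow f x t = spow f x t"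
    by simp
qed

end

theorem proposition4p1:
  fixes R :: "'a::{ring, finite} itself"
  shows "((\<exists>t::nat. t \<ge> 1 \<and> (\<forall>x::'a. spow (*) x t = spow (*) x (2 * t))) \<and>
          (\<exists>t::nat. t \<ge> 1 \<and> (\<forall>x::'a. spow circ_op x t = spow circ_op x (2 * t))))
       \<and> ((\<forall>e::'a. e * e = e \<longrightarrow> (\<forall>x::'a. e * x = x * e)) \<longrightarrow>
          (\<exists>u v. semigroup_identity ((*) :: 'a \<Rightarrow> 'a \<Rightarrow> 'a) u v \<and> reduced_identity u v))"
proof (intro conjI impI)
  let ?t = "fact CARD('a) :: nat"
  show "\<exists>t\<ge>1. \<forall>x::'a. spow (*) x t = spow (*) x (2 * t)"
    and "\<exists>t\<ge>1. \<forall>x::'a. spow circ_op x t = spow circ_op x (2 * t)"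
    using fact_ge_1 finite_spow_fact_card by blast+
  assume central: "\<forall>e::'a. e * e = e \<longrightarrow> (\<forall>x. e * x = x * e)"
  have power_central: "spow (*) x ?t * z = z * spow (*) x ?t" for x z :: 'a
    by (rule mult.spow_central_if_idempotents_central[OF fact_gt_zero finite_spow_fact_card])
      (use central in blast)
  have "semigroup_identity ((*) :: 'a \<Rightarrow> 'a \<Rightarrow> 'a)
      (replicate ?t 0 @ replicate ?t 1) (replicate ?t 1 @ replicate ?t 0)"
    by (rule mult.semigroup_identity_swap_blocks[OF fact_gt_zero power_central])
  moreover have "reduced_identity (replicate ?t 0 @ replicate ?t 1) (replicate ?t 1 @ replicate ?t 0)"
    by (rule reduced_identity_swap_blocks[OF fact_gt_zero]) simp
  ultimately show "\<exists>u v. semigroup_identity ((*) :: 'a \<Rightarrow> 'a \<Rightarrow> 'a) u v \<and> reduced_identity u v"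
    by blast
qed

end
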